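(* Let $\mathcal{H}_A,\mathcal{H}_B,\mathcal{H}_C$ be finite-dimensional Hilbert spaces with fixed reference bases of $\mathcal{H}_A$ and $\mathcal{H}_B$ (and the product basis on $\mathcal{H}_A\otimes\mathcal{H}_B$). For every state $\rho_{ABC}$ on $\mathcal{H}_A\otimes\mathcal{H}_B\otimes\mathcal{H}_C$ with reduced states $\rho_{AC},\rho_{BC}$, $$C^{AB|C}_f(\rho_{ABC})\geq C^{A|BC}_f(\rho_{ABC})+C^{B|C}_f(\rho_{BC}),$$ and consequently $$C^{AB|C}_f(\rho_{ABC})\geq C^{A|C}_f(\rho_{AC})+C^{B|C}_f(\rho_{BC}).$$
   Context: $S$ is the von Neumann entropy. For a bipartite split $X|Y$ where $X$ has a fixed reference basis $\{|k\rangle_X\}$, $\Delta_X(\rho)=\sum_k(|k\rangle\langle k|_X\otimes I_Y)\rho(|k\rangle\langle k|_X\otimes I_Y)$. The IQ coherence of formation is $C^{X|Y}_f(\rho_{XY})=\min\sum_ip_iS(\Delta_X(|\psi_i\rangle\langle\psi_i|_{XY}))$, minimized over all pure-state decompositions $\rho_{XY}=\sum_ip_i|\psi_i\rangle\langle\psi_i|_{XY}$. *)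

theory Defs
  imports "Jordan_Normal_Form.Char_Poly"
begin

text \<open>A composite system with local dimensions d1, d2 is indexed by i = i1 * d2 + i2
(Kronecker / product-basis ordering).\<close>

definition density_mat :: "nat \<Rightarrow> complex mat \<Rightarrow> bool" where
  "density_mat n \<rho> \<longleftrightarrow> \<rho> \<in> carrier_mat n n
     \<and> (\<forall>i<n. \<forall>j<n. \<rho> $$ (j, i) = cnj (\<rho> $$ (i, j)))
     \<and> (\<forall>v \<in> carrier_vec n. 0 \<le> Re (\<Sum>i<n. \<Sum>j<n. cnj (v $ i) * \<rho> $$ (i, j) * v $ j))
     \<and> (\<Sum>i<n. \<rho> $$ (i, i)) = 1"

definition eigenvalue_list :: "complex mat \<Rightarrow> complex list" where
  "eigenvalue_list A = (SOME es. char_poly A = (\<Prod>a\<leftarrow>es. [:- a, 1:]))"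

definition eta :: "real \<Rightarrow> real" where
  "eta x = (if x > 0 then - x * log 2 x else 0)"

definition vn_entropy :: "complex mat \<Rightarrow> real" where
  "vn_entropy \<rho> = (\<Sum>a\<leftarrow>eigenvalue_list \<rho>. eta (Re a))"

definition proj :: "nat \<Rightarrow> complex vec \<Rightarrow> complex mat" where
  "proj n \<psi> = mat n n (\<lambda>(i, j). \<psi> $ i * cnj (\<psi> $ j))"

definition unit_vec :: "nat \<Rightarrow> complex vec \<Rightarrow> bool" where
  "unit_vec n \<psi> \<longleftrightarrow> \<psi> \<in> carrier_vec n \<and> (\<Sum>i<n. (cmod (\<psi> $ i))\<^sup>2) = 1"

definition pure_decomp :: "nat \<Rightarrow> complex mat \<Rightarrow> (real \<times> complex vec) list \<Rightarrow> bool" where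
  "pure_decomp n \<rho> ds \<longleftrightarrow>
     (\<forall>(p, \<psi>) \<in> set ds. 0 \<le> p \<and> unit_vec n \<psi>)
     \<and> (\<forall>i<n. \<forall>j<n. \<rho> $$ (i, j) = (\<Sum>(p, \<psi>)\<leftarrow>ds. complex_of_real p * \<psi> $ i * cnj (\<psi> $ j)))"

text \<open>Dephasing Delta_X on a bipartite system X|Y (dimensions dX, dY):
sum_k (|k><k|_X (x) I_Y) sigma (|k><k|_X (x) I_Y).\<close>
definition dephase :: "nat \<Rightarrow> nat \<Rightarrow> complex mat \<Rightarrow> complex mat" where
  "dephase dX dY \<sigma> = mat (dX * dY) (dX * dY)
     (\<lambda>(i, j). if i div dY = j div dY then \<sigma> $$ (i, j) else 0)"

definition coh_form :: "nat \<Rightarrow> nat \<Rightarrow> complex mat \<Rightarrow> real" where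
  "coh_form dX dY \<rho> = (INF ds \<in> {ds. pure_decomp (dX * dY) \<rho> ds}.
      (\<Sum>(p, \<psi>)\<leftarrow>ds. p * vn_entropy (dephase dX dY (proj (dX * dY) \<psi>))))"

text \<open>Partial traces on a tripartite system with dimensions d1, d2, d3
(index (i1 * d2 + i2) * d3 + i3).\<close>
definition ptrace_first :: "nat \<Rightarrow> nat \<Rightarrow> nat \<Rightarrow> complex mat \<Rightarrow> complex mat" where
  "ptrace_first d1 d2 d3 \<rho> = mat (d2 * d3) (d2 * d3)
     (\<lambda>(i, j). \<Sum>k<d1. \<rho> $$ (k * (d2 * d3) + i, k * (d2 * d3) + j))"

definition ptrace_mid :: "nat \<Rightarrow> nat \<Rightarrow> nat \<Rightarrow> complex mat \<Rightarrow> complex mat" where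
  "ptrace_mid d1 d2 d3 \<rho> = mat (d1 * d3) (d1 * d3)
     (\<lambda>(i, j). \<Sum>k<d2. \<rho> $$ (((i div d3) * d2 + k) * d3 + i mod d3,
                               ((j div d3) * d2 + k) * d3 + j mod d3))"

end

theory Submission
  imports Defs
begin

text \<open>For a pure state \<psi> of ABC, dephasing across AB|C leaves the Shannon entropy of the joint
  distribution P(a, b) of the reference-basis outcomes on A and B. The chain rule
  H(A, B) = H(A) + \<Sigma>_a P(a) H(B | A = a) splits it into the A|BC term of \<psi> and the B|C terms of
  the conditional states \<psi>_a, which together form a pure-state decomposition of \<rho>_BC.
  Conditioning on b instead gives decompositions of \<rho>_AC, and H(A | B) \<le> H(A) bounds their
  A|C cost by the A|BC cost of \<psi>. Taking infima over the decompositions of \<rho>_ABC (which exist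
  by Cholesky elimination) yields both inequalities.\<close>

lemma sum_lessThan_mult:
  fixes f :: "nat \<Rightarrow> 'a::comm_monoid_add"
  shows "(\<Sum>j<m * k. f j) = (\<Sum>a<m. \<Sum>b<k. f (a * k + b))"
  by (simp add: sum.nat_group[symmetric] sum.atLeastLessThan_shift_0 atLeast0LessThan add.commute)

lemma mult_add_less_mult:
  fixes x y X Y :: nat
  assumes "x < X" "y < Y"
  shows "x * Y + y < X * Y"
proof -
  have "x * Y + y < Suc x * Y" using assms(2) by simp
  also have "\<dots> \<le> X * Y" using assms(1) by (intro mult_le_mono1) simp
  finally show ?thesis .
qed

lemma sum_lessThan_mult_block:
  fixes f :: "nat \<Rightarrow> 'a::comm_monoid_add"
  assumes "x < dX"
  shows "(\<Sum>j<dX * dY. if j div dY = x then f j else 0) = (\<Sum>y<dY. f (x * dY + y))"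
proof (cases "dY = 0")
  case False
  then have "(\<Sum>j<dX * dY. if j div dY = x then f j else 0)
      = (\<Sum>a<dX. \<Sum>y<dY. if a = x then f (a * dY + y) else 0)"
    by (simp add: sum_lessThan_mult)
  also have "\<dots> = (\<Sum>a<dX. if a = x then (\<Sum>y<dY. f (x * dY + y)) else 0)"
    by (rule sum.cong) auto
  finally show ?thesis using assms by simp
qed simp

lemma sum_mult_delta_right:
  fixes f :: "nat \<Rightarrow> 'a::semiring_0"
  shows "k < n \<Longrightarrow> (\<Sum>j<n. f j * (if j = k then t else 0)) = f k * t"
  by (simp add: if_distrib[of "(*) _"] cong: if_cong)

lemma sum_mult_delta_left:
  fixes f :: "nat \<Rightarrow> 'a::semiring_0"
  shows "k < n \<Longrightarrow> (\<Sum>j<n. (if j = k then t else 0) * f j) = t * f k"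
  by (simp add: if_distrib[of "\<lambda>x. x * _"] cong: if_cong)

section \<open>Characteristic polynomials and von Neumann entropy\<close>

lemma char_poly_mult_commute:
  fixes A B :: "complex mat"
  assumes A: "A \<in> carrier_mat n m" and B: "B \<in> carrier_mat m n"
  shows "char_poly (A * B) * monom 1 m = monom 1 n * char_poly (B * A)"
proof -
  let ?X = "[:0, 1:] :: complex poly"
  define pA where "pA = map_mat (\<lambda>a. [:a:]) A"
  define pB where "pB = map_mat (\<lambda>a. [:a:]) B"
  have pA: "pA \<in> carrier_mat n m" and pB: "pB \<in> carrier_mat m n"
    using A B by (auto simp: pA_def pB_def)
  have const_sum: "[:sum f S:] = (\<Sum>x\<in>S. [:f x:])" for f :: "nat \<Rightarrow> complex" and S
  proof (induct S rule: infinite_finite_induct)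
    case (insert x F)
    have "[:f x + sum f F:] = [:f x:] + [:sum f F:]" by simp
    then show ?case using insert by simp
  qed auto
  have X_plus: "pCons a 1 = ?X + [:a:]" for a :: complex
    by (simp add: one_pCons)
  have detX: "det (?X \<cdot>\<^sub>m 1\<^sub>m k) = monom 1 k" for k
    by (simp add: det_smult monom_altdef)
  have cpAB: "char_poly_matrix (A * B) = ?X \<cdot>\<^sub>m 1\<^sub>m n + pA * (- pB)"
    using A B pA pB by (intro eq_matI) (auto simp: char_poly_matrix_def pA_def pB_def
      scalar_prod_def const_sum[symmetric] X_plus mult.commute)
  have cpBA: "char_poly_matrix (B * A) = pB * (- pA) + ?X \<cdot>\<^sub>m 1\<^sub>m m"
    using A B pA pB by (intro eq_matI) (auto simp: char_poly_matrix_def pA_def pB_def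
      scalar_prod_def const_sum[symmetric] X_plus mult.commute)
  \<comment> \<open>Sylvester's trick: the block matrix G = [X I, pA; pB, I] is multiplied on the right by
     two block-triangular matrices of determinant X^m, triangularising it in two ways.\<close>
  define G where "G = four_block_mat (?X \<cdot>\<^sub>m 1\<^sub>m n) pA pB (1\<^sub>m m)"
  define R1 where "R1 = four_block_mat (1\<^sub>m n) (0\<^sub>m n m) (- pB) (?X \<cdot>\<^sub>m 1\<^sub>m m)"
  define R2 where "R2 = four_block_mat (1\<^sub>m n) (- pA) (0\<^sub>m m n) (?X \<cdot>\<^sub>m 1\<^sub>m m)"
  have G: "G \<in> carrier_mat (n + m) (n + m)" and R1: "R1 \<in> carrier_mat (n + m) (n + m)"
    and R2: "R2 \<in> carrier_mat (n + m) (n + m)"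
    using pA pB by (auto simp: G_def R1_def R2_def)
  have GR1: "G * R1 = four_block_mat (char_poly_matrix (A * B)) (?X \<cdot>\<^sub>m pA) (0\<^sub>m m n) (?X \<cdot>\<^sub>m 1\<^sub>m m)"
    unfolding G_def R1_def cpAB
    by (subst mult_four_block_mat[of _ n n _ m _ m _ _ n _ m])
       (use pA pB in \<open>auto intro!: cong_four_block_mat\<close>)
  have GR2: "G * R2 = four_block_mat (?X \<cdot>\<^sub>m 1\<^sub>m n) (0\<^sub>m n m) pB (char_poly_matrix (B * A))"
    unfolding G_def R2_def cpBA
    by (subst mult_four_block_mat[of _ n n _ m _ m _ _ n _ m])
       (use pA pB in \<open>auto intro!: cong_four_block_mat\<close>)
  have dR1: "det R1 = monom 1 m" unfolding R1_def
    by (subst det_four_block_mat_upper_right_zero[of _ n _ m]) (use pB detX in auto)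
  have dR2: "det R2 = monom 1 m" unfolding R2_def
    by (subst det_four_block_mat_lower_left_zero[of _ n _ m]) (use pA detX in auto)
  have "det (G * R1) = char_poly (A * B) * monom 1 m"
    unfolding GR1 char_poly_def
    by (subst det_four_block_mat_lower_left_zero[of _ n _ m]) (use pA A B detX in auto)
  then have dG: "det G = char_poly (A * B)"
    unfolding det_mult[OF G R1] dR1 by (simp add: monom_eq_0_iff)
  have "det (G * R2) = monom 1 n * char_poly (B * A)"
    unfolding GR2 char_poly_def
    by (subst det_four_block_mat_upper_right_zero[of _ n _ m]) (use pB A B detX in auto)
  then show ?thesis unfolding det_mult[OF G R2] dR2 dG .
qed

lemma prod_linear_factors_eq_imp_mset_eq:
  fixes xs ys :: "complex list"
  assumes "(\<Prod>a\<leftarrow>xs. [:- a, 1:]) = (\<Prod>a\<leftarrow>ys. [:- a, 1:])"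
  shows "mset xs = mset ys"
  using assms
proof (induct xs arbitrary: ys)
  case Nil
  then show ?case
    using degree_linear_factors[of uminus ys] by (cases ys) auto
next
  case (Cons x xs)
  have "poly (\<Prod>a\<leftarrow>ys. [:- a, 1:]) x = 0" using Cons(2)[symmetric] by simp
  then have "x \<in> set ys" by (auto simp: poly_prod_list prod_list_zero_iff)
  then obtain ys1 ys2 where ys: "ys = ys1 @ x # ys2" by (meson split_list)
  have "[:- x, 1:] * (\<Prod>a\<leftarrow>xs. [:- a, 1:]) = [:- x, 1:] * (\<Prod>a\<leftarrow>ys1 @ ys2. [:- a, 1:])"
    using Cons(2) unfolding ys
    by (simp only: map_append prod_list.append list.map prod_list.Cons mult.left_commute)
  then have "(\<Prod>a\<leftarrow>xs. [:- a, 1:]) = (\<Prod>a\<leftarrow>ys1 @ ys2. [:- a, 1:])"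
    by (metis mult_left_cancel pCons_eq_0_iff one_neq_zero)
  from Cons(1)[OF this] show ?case unfolding ys by simp
qed

lemma vn_entropy_eq_if_char_poly:
  assumes "char_poly A = (\<Prod>a\<leftarrow>es. [:- a, 1:])"
  shows "vn_entropy A = (\<Sum>a\<leftarrow>es. eta (Re a))"
proof -
  have "char_poly A = (\<Prod>a\<leftarrow>eigenvalue_list A. [:- a, 1:])"
    unfolding eigenvalue_list_def using assms by (rule someI)
  then have "mset (eigenvalue_list A) = mset es"
    using assms prod_linear_factors_eq_imp_mset_eq by metis
  then show ?thesis unfolding vn_entropy_def
    by (metis mset_map sum_mset_sum_list)
qed

section \<open>Shannon entropy inequalities\<close>

lemma eta_0 [simp]: "eta 0 = 0"
  by (simp add: eta_def)

lemma eta_nonneg: "0 \<le> x \<Longrightarrow> x \<le> 1 \<Longrightarrow> 0 \<le> eta x"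
  by (auto simp: eta_def mult_nonneg_nonpos)

lemma eta_mult:
  assumes "0 \<le> x" "0 \<le> y"
  shows "eta (x * y) = y * eta x + x * eta y"
proof (cases "x = 0 \<or> y = 0")
  case False
  with assms have "x > 0" "y > 0" by auto
  then show ?thesis by (simp add: eta_def log_mult algebra_simps)
qed auto

lemma sum_eta_split:
  fixes P :: "nat \<Rightarrow> real"
  assumes P: "\<And>b. b < k \<Longrightarrow> 0 \<le> P b"
  defines "W \<equiv> \<Sum>b<k. P b"
  shows "(\<Sum>b<k. eta (P b)) = eta W + W * (\<Sum>b<k. eta (P b / W))"
proof (cases "W = 0")
  case True
  then have "P b = 0" if "b < k" for b
    using P sum_nonneg_eq_0_iff[of "{..<k}" P] that by (auto simp: W_def)
  then show ?thesis using True by simp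
next
  case False
  then have W: "W > 0" using P by (metis W_def less_eq_real_def lessThan_iff sum_nonneg)
  have "(\<Sum>b<k. eta (P b)) = (\<Sum>b<k. eta (W * (P b / W)))" using W by simp
  also have "\<dots> = (\<Sum>b<k. (P b / W) * eta W + W * eta (P b / W))"
    using W P by (intro sum.cong refl eta_mult) auto
  also have "\<dots> = (\<Sum>b<k. P b) / W * eta W + W * (\<Sum>b<k. eta (P b / W))"
    by (simp add: sum.distrib sum_distrib_left sum_divide_distrib[symmetric] sum_distrib_right[symmetric])
  finally show ?thesis using W by (simp add: W_def)
qed

lemma mult_eta_div_le:
  fixes P Q R :: real
  assumes "0 \<le> P" "P \<le> Q" "P \<le> R"
  shows "Q * eta (P / Q) \<le> - P * log 2 R + (Q * R - P) / ln 2"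
proof (cases "P = 0")
  case False
  with assms have P: "P > 0" and Q: "Q > 0" and R: "R > 0" by auto
  have "P * ln (Q * R / P) \<le> P * (Q * R / P - 1)"
    using P Q R by (intro mult_left_mono ln_le_minus_one) auto
  also have "\<dots> = Q * R - P" using P by (simp add: algebra_simps)
  finally have "P * ln (Q * R / P) / ln 2 \<le> (Q * R - P) / ln 2" by (simp add: divide_right_mono)
  moreover have "Q * eta (P / Q) = - P * log 2 R + P * ln (Q * R / P) / ln 2"
    using P Q R
    by (simp add: eta_def log_def ln_div ln_mult algebra_simps diff_divide_distrib add_divide_distrib)
  ultimately show ?thesis by linarith
qed (use assms in \<open>simp add: eta_def\<close>)

text \<open>Conditioning does not increase entropy: H(A | B) \<le> H(A) for the joint distribution P of (A, B).\<close>

lemma conditional_eta_le: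
  fixes P :: "nat \<Rightarrow> nat \<Rightarrow> real"
  assumes P: "\<And>a b. 0 \<le> P a b" and total: "(\<Sum>a<m. \<Sum>b<k. P a b) = 1"
  defines "Q \<equiv> \<lambda>b. \<Sum>a<m. P a b" and "R \<equiv> \<lambda>a. \<Sum>b<k. P a b"
  shows "(\<Sum>b<k. Q b * (\<Sum>a<m. eta (P a b / Q b))) \<le> (\<Sum>a<m. eta (R a))"
proof -
  have R_nonneg: "0 \<le> R a" for a unfolding R_def by (intro sum_nonneg) (simp add: P)
  have PQ: "P a b \<le> Q b" if "a < m" for a b
    unfolding Q_def using that by (intro member_le_sum) (auto simp: P)
  have PR: "P a b \<le> R a" if "b < k" for a b
    unfolding R_def using that by (intro member_le_sum) (auto simp: P)
  have "(\<Sum>b<k. Q b * (\<Sum>a<m. eta (P a b / Q b))) = (\<Sum>b<k. \<Sum>a<m. Q b * eta (P a b / Q b))"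
    by (simp add: sum_distrib_left)
  also have "\<dots> \<le> (\<Sum>b<k. \<Sum>a<m. - P a b * log 2 (R a) + (Q b * R a - P a b) / ln 2)"
    by (intro sum_mono mult_eta_div_le) (auto simp: P PQ PR)
  also have "\<dots> = (\<Sum>b<k. \<Sum>a<m. - P a b * log 2 (R a))
      + (\<Sum>b<k. \<Sum>a<m. Q b * R a - P a b) / ln 2"
    by (simp only: sum.distrib sum_divide_distrib)
  also have "(\<Sum>b<k. \<Sum>a<m. - P a b * log 2 (R a)) = (\<Sum>a<m. eta (R a))"
  proof -
    have "- R a * log 2 (R a) = eta (R a)" for a
      using R_nonneg[of a] by (cases "R a = 0") (auto simp: eta_def)
    moreover have "(\<Sum>b<k. - P a b * log 2 (R a)) = - R a * log 2 (R a)" for a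
      by (simp add: R_def sum_distrib_right sum_negf)
    ultimately show ?thesis
      by (subst sum.swap) simp
  qed
  also have "(\<Sum>b<k. \<Sum>a<m. Q b * R a - P a b) = 0"
  proof -
    have "(\<Sum>a<m. R a) = 1" "(\<Sum>b<k. Q b) = 1"
      using total by (simp_all add: R_def Q_def sum.swap[of _ "{..<k}"])
    then show ?thesis
      using total by (simp add: sum_subtractf sum_distrib_left[symmetric] sum.swap[of _ "{..<k}"])
  qed
  finally show ?thesis by simp
qed

section \<open>Entropy of a dephased pure state\<close>

definition sqnorm :: "nat \<Rightarrow> (nat \<Rightarrow> complex) \<Rightarrow> real" where
  "sqnorm n f = (\<Sum>i<n. (cmod (f i))\<^sup>2)"

definition block_weight :: "nat \<Rightarrow> (nat \<Rightarrow> complex) \<Rightarrow> nat \<Rightarrow> real" where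
  "block_weight dY f x = sqnorm dY (\<lambda>y. f (x * dY + y))"

definition block_entropy :: "nat \<Rightarrow> nat \<Rightarrow> (nat \<Rightarrow> complex) \<Rightarrow> real" where
  "block_entropy dX dY f = (\<Sum>x<dX. eta (block_weight dY f x))"

lemma sqnorm_nonneg: "0 \<le> sqnorm n f"
  by (simp add: sqnorm_def sum_nonneg)

lemma block_weight_nonneg: "0 \<le> block_weight dY f x"
  by (simp add: block_weight_def sqnorm_nonneg)

lemma sum_block_weight: "(\<Sum>x<dX. block_weight dY f x) = sqnorm (dX * dY) f"
  by (simp add: block_weight_def sqnorm_def sum_lessThan_mult)

lemma vn_entropy_dephase_proj:
  assumes "0 < dY"
  shows "vn_entropy (dephase dX dY (proj (dX * dY) \<psi>)) = block_entropy dX dY (($) \<psi>)"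
proof -
  let ?N = "dX * dY"
  \<comment> \<open>The dephased projector is V W, while W V is the diagonal matrix of block weights;
     the two products share their nonzero spectrum.\<close>
  define V where "V = mat ?N dX (\<lambda>(i, x). if i div dY = x then \<psi> $ i else 0)"
  define W where "W = mat dX ?N (\<lambda>(x, j). if j div dY = x then cnj (\<psi> $ j) else 0)"
  define s where "s x = complex_of_real (block_weight dY (($) \<psi>) x)" for x
  define D where "D = mat dX dX (\<lambda>(x, z). if x = z then s x else 0)"
  have V: "V \<in> carrier_mat ?N dX" and W: "W \<in> carrier_mat dX ?N" by (auto simp: V_def W_def)
  have VW: "V * W = dephase dX dY (proj ?N \<psi>)"
  proof (rule eq_matI)
    fix i j assume "i < dim_row (dephase dX dY (proj ?N \<psi>))" "j < dim_col (dephase dX dY (proj ?N \<psi>))"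
    then have i: "i < ?N" and j: "j < ?N" by (auto simp: dephase_def)
    then have "i div dY < dX" using assms by (simp add: less_mult_imp_div_less)
    have "(V * W) $$ (i, j) = (\<Sum>x<dX. (if i div dY = x then \<psi> $ i else 0)
        * (if j div dY = x then cnj (\<psi> $ j) else 0))"
      using i j by (simp add: V_def W_def scalar_prod_def atLeast0LessThan)
    also have "\<dots> = (\<Sum>x<dX. if x = i div dY then
        (if j div dY = i div dY then \<psi> $ i * cnj (\<psi> $ j) else 0) else 0)"
      by (intro sum.cong) auto
    finally show "(V * W) $$ (i, j) = dephase dX dY (proj ?N \<psi>) $$ (i, j)"
      using i j \<open>i div dY < dX\<close> by (auto simp: dephase_def proj_def)
  qed (auto simp: V_def W_def dephase_def)
  have WV: "W * V = D"
  proof (rule eq_matI)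
    fix x z assume "x < dim_row D" "z < dim_col D"
    then have x: "x < dX" and z: "z < dX" by (auto simp: D_def)
    have "(W * V) $$ (x, z) = (\<Sum>j<?N. (if j div dY = x then cnj (\<psi> $ j) else 0)
        * (if j div dY = z then \<psi> $ j else 0))"
      using x z by (simp add: V_def W_def scalar_prod_def atLeast0LessThan)
    also have "\<dots> = (\<Sum>j<?N. if j div dY = x then (if x = z then cnj (\<psi> $ j) * \<psi> $ j else 0) else 0)"
      by (intro sum.cong) auto
    also have "\<dots> = (\<Sum>y<dY. if x = z then cnj (\<psi> $ (x * dY + y)) * \<psi> $ (x * dY + y) else 0)"
      by (rule sum_lessThan_mult_block[OF x])
    also have "\<dots> = D $$ (x, z)"
      using x z by (auto simp: D_def s_def block_weight_def sqnorm_def mult.commute[of "cnj _"]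
        complex_mult_cnj cmod_power2)
    finally show "(W * V) $$ (x, z) = D $$ (x, z)" .
  qed (auto simp: V_def W_def D_def)
  have "char_poly D = (\<Prod>a\<leftarrow>map s [0..<dX]. [:- a, 1:])"
    by (subst char_poly_upper_triangular[of D dX])
       (auto simp: D_def upper_triangular_def diag_mat_def intro!: arg_cong[where f = prod_list])
  moreover have "char_poly (V * W) * monom 1 dX = monom 1 (?N - dX) * char_poly D * monom 1 dX"
    using char_poly_mult_commute[OF V W] assms
    by (simp add: WV mult_monom ac_simps)
  ultimately have "char_poly (V * W) = (\<Prod>a\<leftarrow>replicate (?N - dX) 0 @ map s [0..<dX]. [:- a, 1:])"
    by (simp add: monom_eq_0_iff monom_altdef prod_list_replicate)
  then have "vn_entropy (V * W) = (\<Sum>a\<leftarrow>replicate (?N - dX) 0 @ map s [0..<dX]. eta (Re a))"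
    by (rule vn_entropy_eq_if_char_poly)
  then show ?thesis
    by (simp add: VW block_entropy_def s_def sum_list_replicate comp_def
      sum_set_upt_conv_sum_list_nat[symmetric] atLeast0LessThan)
qed

definition normalized :: "nat \<Rightarrow> (nat \<Rightarrow> complex) \<Rightarrow> complex vec" where
  "normalized n f = (if sqnorm n f > 0 then vec n (\<lambda>i. f i / complex_of_real (sqrt (sqnorm n f)))
                     else vec n (\<lambda>i. if i = 0 then 1 else 0))"

lemma normalized_carrier [simp]: "normalized n f \<in> carrier_vec n"
  by (simp add: normalized_def)

lemma cmod_normalized:
  assumes "0 < sqnorm n f" "i < n"
  shows "(cmod (normalized n f $ i))\<^sup>2 = (cmod (f i))\<^sup>2 / sqnorm n f"
  using assms by (simp add: normalized_def norm_divide power_divide)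

lemma unit_vec_normalized:
  assumes "0 < n"
  shows "unit_vec n (normalized n f)"
proof (cases "sqnorm n f > 0")
  case True
  then have "(\<Sum>i<n. (cmod (normalized n f $ i))\<^sup>2) = (\<Sum>i<n. (cmod (f i))\<^sup>2) / sqnorm n f"
    by (simp add: cmod_normalized sum_divide_distrib)
  then show ?thesis using True by (simp add: unit_vec_def sqnorm_def)
next
  case False
  then have "(\<Sum>i<n. (cmod (normalized n f $ i))\<^sup>2) = (\<Sum>i<n. if i = 0 then 1 else 0)"
    by (intro sum.cong refl) (auto simp: normalized_def)
  then show ?thesis using assms by (simp add: unit_vec_def)
qed

lemma sqnorm_mult_normalized:
  assumes "i < n" "j < n"
  shows "complex_of_real (sqnorm n f) * normalized n f $ i * cnj (normalized n f $ j) = f i * cnj (f j)"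
proof (cases "sqnorm n f > 0")
  case True
  then have "complex_of_real (sqnorm n f)
      = complex_of_real (sqrt (sqnorm n f)) * complex_of_real (sqrt (sqnorm n f))"
    by (simp flip: of_real_mult)
  then show ?thesis using True assms by (simp add: normalized_def field_simps)
next
  case False
  then have "sqnorm n f = 0" using sqnorm_nonneg[of n f] by simp
  then have "f i = 0" if "i < n" for i
    using that sum_nonneg_eq_0_iff[of "{..<n}" "\<lambda>i. (cmod (f i))\<^sup>2"] by (simp add: sqnorm_def)
  then show ?thesis using assms \<open>sqnorm n f = 0\<close> by simp
qed

lemma scaled_block_entropy_normalized:
  "sqnorm (dX * dY) f * block_entropy dX dY (($) (normalized (dX * dY) f))
     = sqnorm (dX * dY) f * (\<Sum>x<dX. eta (block_weight dY f x / sqnorm (dX * dY) f))"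
proof (cases "sqnorm (dX * dY) f > 0")
  case True
  have "block_weight dY (($) (normalized (dX * dY) f)) x = block_weight dY f x / sqnorm (dX * dY) f"
    if "x < dX" for x
    using True mult_add_less_mult[OF that]
    by (simp add: block_weight_def sqnorm_def cmod_normalized sum_divide_distrib)
  then show ?thesis by (simp add: block_entropy_def)
qed (use sqnorm_nonneg[of "dX * dY" f] in simp)

section \<open>Existence of pure-state decompositions\<close>

definition quad_form :: "nat \<Rightarrow> complex mat \<Rightarrow> (nat \<Rightarrow> complex) \<Rightarrow> complex" where
  "quad_form n \<rho> v = (\<Sum>i<n. \<Sum>j<n. cnj (v i) * \<rho> $$ (i, j) * v j)"

definition hermitian_on :: "nat \<Rightarrow> complex mat \<Rightarrow> bool" where
  "hermitian_on n \<rho> \<longleftrightarrow> (\<forall>i<n. \<forall>j<n. \<rho> $$ (j, i) = cnj (\<rho> $$ (i, j)))"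

definition psd_on :: "nat \<Rightarrow> complex mat \<Rightarrow> bool" where
  "psd_on n \<rho> \<longleftrightarrow> (\<forall>v. 0 \<le> Re (quad_form n \<rho> v))"

lemma hermitian_onD:
  "hermitian_on n \<rho> \<Longrightarrow> i < n \<Longrightarrow> j < n \<Longrightarrow> \<rho> $$ (j, i) = cnj (\<rho> $$ (i, j))"
  unfolding hermitian_on_def by blast

lemma density_mat_hermitian_psd:
  assumes "density_mat n \<rho>"
  shows "hermitian_on n \<rho>" "psd_on n \<rho>"
proof -
  note density = assms[unfolded density_mat_def]
  show "hermitian_on n \<rho>"
    unfolding hermitian_on_def by (rule density[THEN conjunct2, THEN conjunct1])
  show "psd_on n \<rho>" unfolding psd_on_def
  proof
    fix v :: "nat \<Rightarrow> complex"
    have "0 \<le> Re (\<Sum>i<n. \<Sum>j<n. cnj (vec n v $ i) * \<rho> $$ (i, j) * vec n v $ j)"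
      using density[THEN conjunct2, THEN conjunct2, THEN conjunct1] vec_carrier by (rule bspec)
    then show "0 \<le> Re (quad_form n \<rho> v)" by (simp add: quad_form_def)
  qed
qed

lemma quad_form_eq_inner:
  "quad_form n \<rho> v = (\<Sum>i<n. cnj (v i) * (\<Sum>j<n. \<rho> $$ (i, j) * v j))"
  by (simp add: quad_form_def sum_distrib_left mult.assoc)

lemma quad_form_add_basis:
  assumes k: "k < n"
  shows "quad_form n \<rho> (\<lambda>i. v i + (if i = k then t else 0)) =
     quad_form n \<rho> v + (\<Sum>i<n. cnj (v i) * \<rho> $$ (i, k)) * t + cnj t * (\<Sum>j<n. \<rho> $$ (k, j) * v j)
     + cnj t * \<rho> $$ (k, k) * t"
proof -
  define w where "w = (\<lambda>i. v i + (if i = k then t else 0))"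
  define S where "S i = (\<Sum>j<n. \<rho> $$ (i, j) * v j) + \<rho> $$ (i, k) * t" for i
  have "(\<Sum>j<n. \<rho> $$ (i, j) * w j) = S i" for i
    using k by (simp only: w_def S_def distrib_left sum.distrib sum_mult_delta_right)
  then have "quad_form n \<rho> w = (\<Sum>i<n. cnj (w i) * S i)"
    by (simp add: quad_form_eq_inner)
  also have "\<dots> = (\<Sum>i<n. cnj (v i) * S i) + cnj t * S k"
    using k by (simp add: w_def distrib_right sum.distrib if_distrib[of cnj] sum_mult_delta_left cong: if_cong)
  also have "\<dots> = quad_form n \<rho> v + (\<Sum>i<n. cnj (v i) * \<rho> $$ (i, k)) * t
      + cnj t * (\<Sum>j<n. \<rho> $$ (k, j) * v j) + cnj t * \<rho> $$ (k, k) * t"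
  proof -
    have "(\<Sum>i<n. cnj (v i) * (\<rho> $$ (i, k) * t)) = (\<Sum>i<n. cnj (v i) * \<rho> $$ (i, k)) * t"
      by (simp add: sum_distrib_right mult.assoc)
    then show ?thesis
      by (simp only: S_def quad_form_eq_inner distrib_left sum.distrib mult.assoc add.assoc)
  qed
  finally show ?thesis by (simp only: w_def)
qed

lemma quad_form_basis:
  assumes "k < n"
  shows "quad_form n \<rho> (\<lambda>i. if i = k then t else 0) = cnj t * \<rho> $$ (k, k) * t"
  using quad_form_add_basis[OF assms, of \<rho> "\<lambda>_. 0" t] by (simp add: quad_form_def)

lemma psd_on_diag_zero_imp_row_zero:
  assumes herm: "hermitian_on n \<rho>" and psd: "psd_on n \<rho>" and k: "k < n" and j: "j < n"
    and zero: "\<rho> $$ (k, k) = 0"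
  shows "\<rho> $$ (k, j) = 0"
proof (rule ccontr)
  let ?c = "\<rho> $$ (k, j)"
  assume "?c \<noteq> 0"
  then have kj: "k \<noteq> j" and c: "(cmod ?c)\<^sup>2 > 0" using zero by auto
  \<comment> \<open>Moving from the basis vector e_j in the direction e_k lowers the form linearly, since
     the quadratic term \<rho>_kk vanishes.\<close>
  define s where "s = (\<bar>Re (\<rho> $$ (j, j))\<bar> + 1) / (2 * (cmod ?c)\<^sup>2)"
  define v where "v = (\<lambda>i. (if i = j then 1 else 0) + (if i = k then - complex_of_real s * ?c else 0))"
  have row: "(\<Sum>l<n. \<rho> $$ (k, l) * (if l = j then 1 else 0)) = ?c"
    and col: "(\<Sum>i<n. cnj (if i = j then 1 else 0) * \<rho> $$ (i, k)) = cnj ?c"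
    using j hermitian_onD[OF herm k j]
    by (simp_all add: if_distrib[of cnj] sum_mult_delta_right sum_mult_delta_left cong: if_cong)
  have "quad_form n \<rho> v = \<rho> $$ (j, j) - complex_of_real s * cnj ?c * ?c - complex_of_real s * cnj ?c * ?c"
    using quad_form_add_basis[OF k, of \<rho> "\<lambda>i. if i = j then 1 else 0" "- complex_of_real s * ?c"]
    unfolding v_def row col quad_form_basis[OF j, of \<rho> 1] zero by simp
  also have "\<dots> = \<rho> $$ (j, j) - complex_of_real (2 * s * (cmod ?c)\<^sup>2)"
    by (simp add: complex_mult_cnj cmod_power2 mult.commute[of "cnj _"])
  also have "2 * s * (cmod ?c)\<^sup>2 = \<bar>Re (\<rho> $$ (j, j))\<bar> + 1"
    using c by (simp add: s_def)
  finally have "Re (quad_form n \<rho> v) = Re (\<rho> $$ (j, j)) - (\<bar>Re (\<rho> $$ (j, j))\<bar> + 1)"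
    by simp
  moreover have "0 \<le> Re (quad_form n \<rho> v)" using psd by (simp add: psd_on_def)
  ultimately show False by linarith
qed

text \<open>One step of Cholesky elimination: subtracting u u* with u = \<rho> e_k / \<surd>\<rho>_kk clears
  row and column k. Positivity survives because the new form at v is the old one at v + t e_k,
  with t chosen to complete the square.\<close>

lemma psd_on_eliminate_pivot:
  assumes herm: "hermitian_on n \<rho>" and psd: "psd_on n \<rho>" and k: "k < n"
    and r: "\<rho> $$ (k, k) = complex_of_real r" and r_pos: "0 < r"
    and u_def: "u = (\<lambda>i. \<rho> $$ (i, k) / complex_of_real (sqrt r))"
  defines "\<rho>' \<equiv> mat n n (\<lambda>(i, j). \<rho> $$ (i, j) - u i * cnj (u j))"
  shows "hermitian_on n \<rho>'" "psd_on n \<rho>'" "\<And>j. j < n \<Longrightarrow> \<rho>' $$ (k, j) = 0"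
    "\<And>i. i < n \<Longrightarrow> \<rho>' $$ (i, k) = 0"
proof -
  have sqrt_r: "complex_of_real (sqrt r) * complex_of_real (sqrt r) = complex_of_real r"
    using r_pos by (simp flip: of_real_mult)
  have r_nz: "complex_of_real r \<noteq> 0" using r_pos by simp
  show herm': "hermitian_on n \<rho>'"
    unfolding hermitian_on_def
  proof (intro allI impI)
    fix i j assume "i < n" "j < n"
    then show "\<rho>' $$ (j, i) = cnj (\<rho>' $$ (i, j))"
      using hermitian_onD[OF herm, of i j] by (simp add: \<rho>'_def)
  qed
  show row: "\<rho>' $$ (k, j) = 0" if j: "j < n" for j
  proof -
    have "u k * cnj (u j) = \<rho> $$ (k, k) * cnj (\<rho> $$ (j, k)) / complex_of_real r"
      by (simp add: u_def sqrt_r[symmetric])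
    also have "\<dots> = \<rho> $$ (k, j)" using r r_nz hermitian_onD[OF herm j k] by simp
    finally show ?thesis using j k by (simp add: \<rho>'_def)
  qed
  show "\<rho>' $$ (i, k) = 0" if "i < n" for i
    using hermitian_onD[OF herm' k that] row[OF that] by simp
  show "psd_on n \<rho>'" unfolding psd_on_def
  proof
    fix v
    define y where "y = (\<Sum>j<n. \<rho> $$ (k, j) * v j)"
    define t where "t = - y / complex_of_real r"
    have col: "(\<Sum>i<n. cnj (v i) * \<rho> $$ (i, k)) = cnj y"
      unfolding y_def using hermitian_onD[OF herm _ k] k by (auto intro!: sum.cong)
    have "quad_form n \<rho> (\<lambda>i. v i + (if i = k then t else 0))
        = quad_form n \<rho> v + cnj t * y + cnj y * t + cnj t * complex_of_real r * t"
      using quad_form_add_basis[OF k, of \<rho> v t] col r by (simp add: y_def)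
    also have "\<dots> = quad_form n \<rho> v - y * cnj y / complex_of_real r"
      using r_nz by (simp add: t_def field_simps)
    also have "\<dots> = quad_form n \<rho> v - (\<Sum>i<n. cnj (v i) * u i) * (\<Sum>j<n. cnj (u j) * v j)"
    proof -
      have "(\<Sum>i<n. cnj (v i) * u i) = cnj y / complex_of_real (sqrt r)"
        using col by (simp add: u_def sum_divide_distrib[symmetric])
      moreover have "(\<Sum>j<n. cnj (u j) * v j) = y / complex_of_real (sqrt r)"
        unfolding y_def u_def using k
        by (auto simp: hermitian_onD[OF herm _ k] sum_divide_distrib[symmetric] intro!: sum.cong)
      ultimately show ?thesis by (simp add: sqrt_r[symmetric] mult.commute)
    qed
    also have "\<dots> = quad_form n \<rho>' v"
      by (simp add: quad_form_def \<rho>'_def algebra_simps sum_subtractf sum_product)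
    finally show "0 \<le> Re (quad_form n \<rho>' v)"
      using psd by (metis psd_on_def)
  qed
qed

lemma pure_decomp_exists_if_vanishing_below:
  assumes "hermitian_on n \<rho>" "psd_on n \<rho>"
    and "\<And>i j. i < n \<Longrightarrow> j < n \<Longrightarrow> i < k \<or> j < k \<Longrightarrow> \<rho> $$ (i, j) = 0"
  shows "\<exists>ds. pure_decomp n \<rho> ds"
  using assms
proof (induction "n - k" arbitrary: \<rho> k)
  case 0
  then have "pure_decomp n \<rho> []" by (auto simp: pure_decomp_def)
  then show ?case by blast
next
  case (Suc m)
  then have k: "k < n" and m: "m = n - Suc k" by auto
  show ?case
  proof (cases "\<rho> $$ (k, k) = 0")
    case True
    then have "\<rho> $$ (k, j) = 0" "\<rho> $$ (j, k) = 0" if "j < n" for j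
      using psd_on_diag_zero_imp_row_zero[OF Suc.prems(1,2) k that]
        hermitian_onD[OF Suc.prems(1) k that] by simp_all
    then show ?thesis
      using Suc.hyps(1)[OF m Suc.prems(1,2)] Suc.prems(3) by (metis less_antisym)
  next
    case False
    define r where "r = Re (\<rho> $$ (k, k))"
    have r: "\<rho> $$ (k, k) = complex_of_real r"
      using hermitian_onD[OF Suc.prems(1) k k] unfolding r_def
      by (metis Reals_cnj_iff of_real_Re)
    have "0 \<le> r"
      using Suc.prems(2) quad_form_basis[OF k, of \<rho> 1] unfolding psd_on_def r_def by simp metis
    with False r have r_pos: "0 < r" by auto
    define u where "u = (\<lambda>i. \<rho> $$ (i, k) / complex_of_real (sqrt r))"
    define \<rho>' where "\<rho>' = mat n n (\<lambda>(i, j). \<rho> $$ (i, j) - u i * cnj (u j))"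
    note elim = psd_on_eliminate_pivot[OF Suc.prems(1,2) k r r_pos u_def, folded \<rho>'_def]
    have vanish: "\<rho>' $$ (i, j) = 0" if "i < n" "j < n" "i < Suc k \<or> j < Suc k" for i j
    proof (cases "i = k \<or> j = k")
      case False
      with that have "i < k \<or> j < k" by auto
      then have "\<rho> $$ (i, j) = 0" "\<rho> $$ (i, k) = 0 \<or> \<rho> $$ (j, k) = 0"
        using Suc.prems(3) that k by blast+
      then show ?thesis using that by (auto simp: \<rho>'_def u_def)
    qed (use elim(3,4) that in auto)
    obtain ds where ds: "pure_decomp n \<rho>' ds"
      using Suc.hyps(1)[OF m elim(1,2) vanish] by blast
    have "\<rho> $$ (i, j) = complex_of_real (sqnorm n u) * normalized n u $ i * cnj (normalized n u $ j)
        + \<rho>' $$ (i, j)" if "i < n" "j < n" for i j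
      using that by (simp add: \<rho>'_def sqnorm_mult_normalized)
    then have "pure_decomp n \<rho> ((sqnorm n u, normalized n u) # ds)"
      using ds k unit_vec_normalized[of n u] sqnorm_nonneg[of n u] by (simp add: pure_decomp_def)
    then show ?thesis by blast
  qed
qed

lemma density_mat_pure_decomp_exists:
  "density_mat n \<rho> \<Longrightarrow> \<exists>ds. pure_decomp n \<rho> ds"
  using pure_decomp_exists_if_vanishing_below[of n \<rho> 0] density_mat_hermitian_psd by blast

definition coherence_cost :: "nat \<Rightarrow> nat \<Rightarrow> (real \<times> complex vec) list \<Rightarrow> real" where
  "coherence_cost dX dY ds = (\<Sum>(p, \<psi>)\<leftarrow>ds. p * vn_entropy (dephase dX dY (proj (dX * dY) \<psi>)))"

lemma coherence_cost_eq:
  assumes "0 < dY"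
  shows "coherence_cost dX dY ds = (\<Sum>(p, \<psi>)\<leftarrow>ds. p * block_entropy dX dY (($) \<psi>))"
  unfolding coherence_cost_def using vn_entropy_dephase_proj[OF assms] by (simp add: case_prod_beta)

lemma block_entropy_nonneg:
  assumes "sqnorm (dX * dY) f = 1"
  shows "0 \<le> block_entropy dX dY f"
proof -
  have "block_weight dY f x \<le> 1" if "x < dX" for x
    using member_le_sum[of x "{..<dX}" "block_weight dY f"] that assms
    by (simp add: block_weight_nonneg sum_block_weight)
  then show ?thesis
    by (auto simp: block_entropy_def block_weight_nonneg intro!: sum_nonneg eta_nonneg)
qed

lemma coh_form_le_coherence_cost:
  assumes "0 < dY" and "pure_decomp (dX * dY) \<rho> ds"
  shows "coh_form dX dY \<rho> \<le> coherence_cost dX dY ds"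
proof -
  have "0 \<le> coherence_cost dX dY ds'" if "pure_decomp (dX * dY) \<rho> ds'" for ds'
    unfolding coherence_cost_eq[OF assms(1)]
  proof (intro sum_list_nonneg)
    fix x assume "x \<in> set (map (\<lambda>(p, \<psi>). p * block_entropy dX dY (($) \<psi>)) ds')"
    then obtain p \<psi> where x: "x = p * block_entropy dX dY (($) \<psi>)" and "(p, \<psi>) \<in> set ds'" by auto
    with that have "0 \<le> p" "sqnorm (dX * dY) (($) \<psi>) = 1"
      by (auto simp: pure_decomp_def unit_vec_def sqnorm_def)
    then show "0 \<le> x" unfolding x by (simp add: block_entropy_nonneg)
  qed
  then have "bdd_below (coherence_cost dX dY ` {ds. pure_decomp (dX * dY) \<rho> ds})"
    by (intro bdd_belowI[of _ 0]) auto
  then show ?thesis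
    unfolding coh_form_def coherence_cost_def[symmetric] by (rule cINF_lower) (use assms(2) in simp)
qed

text \<open>Tracing out a subsystem of a pure state \<psi> in its reference basis: outcome k leaves the
  conditional state \<psi>_k(y) = \<psi>(g k y), where g k embeds the remaining indices, with
  probability sqnorm \<psi>_k.\<close>

definition branch_ensemble ::
    "nat \<Rightarrow> nat \<Rightarrow> (nat \<Rightarrow> nat \<Rightarrow> nat) \<Rightarrow> (real \<times> complex vec) list \<Rightarrow> (real \<times> complex vec) list"
  where "branch_ensemble n K g ds = concat (map (\<lambda>(p, \<psi>).
    map (\<lambda>k. (p * sqnorm n (\<lambda>y. \<psi> $ g k y), normalized n (\<lambda>y. \<psi> $ g k y))) [0..<K]) ds)"

lemma sum_list_branch_ensemble:
  "(\<Sum>(q, \<phi>)\<leftarrow>branch_ensemble n K g ds. q * h \<phi>)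
     = (\<Sum>(p, \<psi>)\<leftarrow>ds. p * (\<Sum>k<K. sqnorm n (\<lambda>y. \<psi> $ g k y) * h (normalized n (\<lambda>y. \<psi> $ g k y))))"
  by (induct ds) (auto simp: branch_ensemble_def comp_def sum_set_upt_conv_sum_list_nat[symmetric]
    atLeast0LessThan sum_distrib_left mult.assoc)

lemma pure_decomp_branch_ensemble:
  assumes ds: "pure_decomp N \<rho> ds" and n: "0 < n"
    and g: "\<And>k y. k < K \<Longrightarrow> y < n \<Longrightarrow> g k y < N"
    and \<sigma>: "\<And>i j. i < n \<Longrightarrow> j < n \<Longrightarrow> \<sigma> $$ (i, j) = (\<Sum>k<K. \<rho> $$ (g k i, g k j))"
  shows "pure_decomp n \<sigma> (branch_ensemble n K g ds)"
  unfolding pure_decomp_def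
proof (intro conjI allI impI)
  show "\<forall>(q, \<phi>)\<in>set (branch_ensemble n K g ds). 0 \<le> q \<and> unit_vec n \<phi>"
    using ds n by (auto simp: branch_ensemble_def pure_decomp_def sqnorm_nonneg unit_vec_normalized)
next
  fix i j assume i: "i < n" and j: "j < n"
  have "\<sigma> $$ (i, j) = (\<Sum>k<K. \<Sum>(p, \<psi>)\<leftarrow>ds. complex_of_real p * \<psi> $ g k i * cnj (\<psi> $ g k j))"
    using ds g i j by (simp add: \<sigma> pure_decomp_def)
  also have "\<dots> = (\<Sum>(p, \<psi>)\<leftarrow>ds. \<Sum>k<K. complex_of_real p * \<psi> $ g k i * cnj (\<psi> $ g k j))"
    by (induct ds) (auto simp: sum.distrib)
  also have "\<dots> = (\<Sum>(q, \<phi>)\<leftarrow>branch_ensemble n K g ds. complex_of_real q * \<phi> $ i * cnj (\<phi> $ j))"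
    (is "_ = ?ensemble")
    using sqnorm_mult_normalized[OF i j]
    by (induct ds) (auto simp: branch_ensemble_def comp_def sum_set_upt_conv_sum_list_nat[symmetric]
      atLeast0LessThan ac_simps)
  finally show "\<sigma> $$ (i, j) = ?ensemble" .
qed

section \<open>Tripartite systems\<close>

text \<open>The basis vector |a,b,c\<rangle> of H_A \<otimes> H_B \<otimes> H_C has index (a * dB + b) * dC + c. This is
  a * (dB * dC) + (b * dC + c), the form used by ptrace_first, and mid_index dB dC b (a * dC + c),
  where a * dC + c is the index of |a,c\<rangle> in H_A \<otimes> H_C.\<close>

definition mid_index :: "nat \<Rightarrow> nat \<Rightarrow> nat \<Rightarrow> nat \<Rightarrow> nat" where
  "mid_index dB dC b i = ((i div dC) * dB + b) * dC + i mod dC"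

lemma mid_index_less:
  assumes "i < dA * dC" "b < dB"
  shows "mid_index dB dC b i < dA * dB * dC"
proof -
  have "0 < dC" using assms(1) by (cases dC) auto
  then have "i div dC < dA" using assms(1) by (simp add: less_mult_imp_div_less)
  then show ?thesis
    unfolding mid_index_def using \<open>0 < dC\<close> assms(2) by (intro mult_add_less_mult) simp_all
qed

lemma pure_decomp_ptrace_first:
  assumes "pure_decomp (dA * dB * dC) \<rho> ds" "0 < dB * dC"
  shows "pure_decomp (dB * dC) (ptrace_first dA dB dC \<rho>)
           (branch_ensemble (dB * dC) dA (\<lambda>a i. a * (dB * dC) + i) ds)"
  using assms
  by (intro pure_decomp_branch_ensemble)
     (auto simp: ptrace_first_def mult.assoc intro: mult_add_less_mult)

lemma pure_decomp_ptrace_mid: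
  assumes "pure_decomp (dA * dB * dC) \<rho> ds" "0 < dA * dC"
  shows "pure_decomp (dA * dC) (ptrace_mid dA dB dC \<rho>)
           (branch_ensemble (dA * dC) dB (mid_index dB dC) ds)"
proof (rule pure_decomp_branch_ensemble[OF assms])
  show "mid_index dB dC b i < dA * dB * dC" if "b < dB" "i < dA * dC" for b i
    using that by (simp add: mid_index_less)
qed (simp add: ptrace_mid_def mid_index_def)

lemma mid_index_mult_add: "c < dC \<Longrightarrow> mid_index dB dC b (a * dC + c) = (a * dB + b) * dC + c"
  by (simp add: mid_index_def)

lemma block_weight_mult_split:
  "block_weight (dB * dC) f a = (\<Sum>b<dB. block_weight dC f (a * dB + b))"
  by (simp add: block_weight_def sqnorm_def sum_lessThan_mult algebra_simps)

lemma block_entropy_chain_rule: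
  "block_entropy (dA * dB) dC f = block_entropy dA (dB * dC) f
     + (\<Sum>a<dA. sqnorm (dB * dC) (\<lambda>y. f (a * (dB * dC) + y))
          * block_entropy dB dC (($) (normalized (dB * dC) (\<lambda>y. f (a * (dB * dC) + y)))))"
proof -
  define P where "P a b = block_weight dC f (a * dB + b)" for a b
  have sqnorm_P: "sqnorm (dB * dC) (\<lambda>y. f (a * (dB * dC) + y)) = (\<Sum>b<dB. P a b)" for a
    using block_weight_mult_split[where dB = dB and dC = dC and f = f and a = a]
    by (simp add: P_def block_weight_def)
  have block_weight_P: "block_weight dC (\<lambda>y. f (a * (dB * dC) + y)) b = P a b" for a b
    by (simp add: P_def block_weight_def algebra_simps)
  have "block_entropy (dA * dB) dC f = (\<Sum>a<dA. \<Sum>b<dB. eta (P a b))"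
    by (simp add: block_entropy_def sum_lessThan_mult P_def)
  also have "\<dots> = (\<Sum>a<dA. eta (\<Sum>b<dB. P a b)
      + (\<Sum>b<dB. P a b) * (\<Sum>b<dB. eta (P a b / (\<Sum>b<dB. P a b))))"
    by (intro sum.cong refl sum_eta_split) (simp add: P_def block_weight_nonneg)
  also have "\<dots> = block_entropy dA (dB * dC) f
      + (\<Sum>a<dA. (\<Sum>b<dB. P a b) * (\<Sum>b<dB. eta (P a b / (\<Sum>b<dB. P a b))))"
    by (simp add: sum.distrib block_entropy_def block_weight_mult_split P_def)
  finally show ?thesis
    unfolding scaled_block_entropy_normalized by (simp only: sqnorm_P block_weight_P)
qed

lemma block_entropy_mid_le:
  assumes "sqnorm (dA * dB * dC) f = 1"
  shows "(\<Sum>b<dB. sqnorm (dA * dC) (\<lambda>y. f (mid_index dB dC b y))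
            * block_entropy dA dC (($) (normalized (dA * dC) (\<lambda>y. f (mid_index dB dC b y)))))
         \<le> block_entropy dA (dB * dC) f"
proof -
  define P where "P a b = block_weight dC f (a * dB + b)" for a b
  have sqnorm_P: "sqnorm (dA * dC) (\<lambda>y. f (mid_index dB dC b y)) = (\<Sum>a<dA. P a b)" for b
    by (simp add: P_def block_weight_def sqnorm_def sum_lessThan_mult mid_index_mult_add)
  have block_weight_P: "block_weight dC (\<lambda>y. f (mid_index dB dC b y)) a = P a b" for a b
    by (simp add: P_def block_weight_def sqnorm_def mid_index_mult_add)
  have "(\<Sum>a<dA. \<Sum>b<dB. P a b) = 1"
    using sum_block_weight[where dX = "dA * dB" and dY = dC and f = f] assms
    by (simp add: P_def sum_lessThan_mult)
  then have "(\<Sum>b<dB. (\<Sum>a<dA. P a b) * (\<Sum>a<dA. eta (P a b / (\<Sum>a<dA. P a b))))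
      \<le> (\<Sum>a<dA. eta (\<Sum>b<dB. P a b))"
    by (intro conditional_eta_le) (simp add: P_def block_weight_nonneg)
  also have "\<dots> = block_entropy dA (dB * dC) f"
    by (simp add: block_entropy_def block_weight_mult_split P_def)
  finally show ?thesis
    unfolding scaled_block_entropy_normalized by (simp only: sqnorm_P block_weight_P)
qed

lemma coherence_cost_chain_rule:
  assumes "0 < dB" "0 < dC"
  shows "coherence_cost (dA * dB) dC ds = coherence_cost dA (dB * dC) ds
           + coherence_cost dB dC (branch_ensemble (dB * dC) dA (\<lambda>a i. a * (dB * dC) + i) ds)"
proof -
  have "0 < dB * dC" using assms by simp
  then show ?thesis
    unfolding coherence_cost_eq[OF assms(2)] coherence_cost_eq[OF \<open>0 < dB * dC\<close>]
      sum_list_branch_ensemble[where h = "\<lambda>\<phi>. block_entropy dB dC (($) \<phi>)"]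
    by (induct ds) (auto simp: block_entropy_chain_rule distrib_left)
qed

lemma coherence_cost_ptrace_mid_le:
  assumes "0 < dB" "0 < dC" and ds: "\<forall>(p, \<psi>)\<in>set ds. 0 \<le> p \<and> unit_vec (dA * dB * dC) \<psi>"
  shows "coherence_cost dA dC (branch_ensemble (dA * dC) dB (mid_index dB dC) ds)
           \<le> coherence_cost dA (dB * dC) ds"
  unfolding coherence_cost_eq[OF assms(2)] coherence_cost_eq[of "dB * dC", OF mult_pos_pos[OF assms(1,2)]]
    sum_list_branch_ensemble[where h = "\<lambda>\<phi>. block_entropy dA dC (($) \<phi>)"]
proof (rule sum_list_mono)
  fix d assume "d \<in> set ds"
  then obtain p \<psi> where d: "d = (p, \<psi>)" "0 \<le> p" "sqnorm (dA * dB * dC) (($) \<psi>) = 1"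
    using ds by (cases d) (auto simp: unit_vec_def sqnorm_def)
  show "(case d of (p, \<psi>) \<Rightarrow> p * (\<Sum>b<dB. sqnorm (dA * dC) (\<lambda>y. \<psi> $ mid_index dB dC b y)
          * block_entropy dA dC (($) (normalized (dA * dC) (\<lambda>y. \<psi> $ mid_index dB dC b y)))))
        \<le> (case d of (p, \<psi>) \<Rightarrow> p * block_entropy dA (dB * dC) (($) \<psi>))"
    unfolding d(1) using block_entropy_mid_le[OF d(3)] d(2) by (simp add: mult_left_mono)
qed

lemma coh_form_bounds_le_coherence_cost:
  assumes pos: "0 < dA" "0 < dB" "0 < dC" and ds: "pure_decomp (dA * dB * dC) \<rho> ds"
  shows "coh_form dA (dB * dC) \<rho> + coh_form dB dC (ptrace_first dA dB dC \<rho>)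
           \<le> coherence_cost (dA * dB) dC ds"
    and "coh_form dA dC (ptrace_mid dA dB dC \<rho>) + coh_form dB dC (ptrace_first dA dB dC \<rho>)
           \<le> coherence_cost (dA * dB) dC ds"
proof -
  let ?first = "branch_ensemble (dB * dC) dA (\<lambda>a i. a * (dB * dC) + i) ds"
  let ?mid = "branch_ensemble (dA * dC) dB (mid_index dB dC) ds"
  have A_BC: "coh_form dA (dB * dC) \<rho> \<le> coherence_cost dA (dB * dC) ds"
    using pos ds by (intro coh_form_le_coherence_cost) (simp_all add: mult.assoc)
  have B_C: "coh_form dB dC (ptrace_first dA dB dC \<rho>) \<le> coherence_cost dB dC ?first"
    using pos ds by (intro coh_form_le_coherence_cost pure_decomp_ptrace_first) simp_all
  have "coh_form dA dC (ptrace_mid dA dB dC \<rho>) \<le> coherence_cost dA dC ?mid"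
    using pos ds by (intro coh_form_le_coherence_cost pure_decomp_ptrace_mid) simp_all
  also have "\<dots> \<le> coherence_cost dA (dB * dC) ds"
    using pos ds by (intro coherence_cost_ptrace_mid_le) (auto simp: pure_decomp_def)
  finally have A_C: "coh_form dA dC (ptrace_mid dA dB dC \<rho>) \<le> coherence_cost dA (dB * dC) ds" .
  have "coherence_cost (dA * dB) dC ds = coherence_cost dA (dB * dC) ds + coherence_cost dB dC ?first"
    by (rule coherence_cost_chain_rule[OF pos(2,3)])
  then show "coh_form dA (dB * dC) \<rho> + coh_form dB dC (ptrace_first dA dB dC \<rho>)
           \<le> coherence_cost (dA * dB) dC ds"
    and "coh_form dA dC (ptrace_mid dA dB dC \<rho>) + coh_form dB dC (ptrace_first dA dB dC \<rho>)
           \<le> coherence_cost (dA * dB) dC ds"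
    using A_BC B_C A_C by linarith+
qed

theorem proposition3:
  fixes dA dB dC :: nat and \<rho> :: "complex mat"
  assumes "density_mat (dA * dB * dC) \<rho>"
  shows "coh_form (dA * dB) dC \<rho>
           \<ge> coh_form dA (dB * dC) \<rho> + coh_form dB dC (ptrace_first dA dB dC \<rho>)
       \<and> coh_form (dA * dB) dC \<rho>
           \<ge> coh_form dA dC (ptrace_mid dA dB dC \<rho>) + coh_form dB dC (ptrace_first dA dB dC \<rho>)"
proof -
  have "(\<Sum>i<dA * dB * dC. \<rho> $$ (i, i)) = 1"
    using assms unfolding density_mat_def by (elim conjE)
  then have pos: "0 < dA" "0 < dB" "0 < dC" by (auto intro: gr0I)
  define D where "D = {ds. pure_decomp (dA * dB * dC) \<rho> ds}"
  have "D \<noteq> {}" using density_mat_pure_decomp_exists[OF assms] by (simp add: D_def)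
  have "coh_form (dA * dB) dC \<rho> = (INF ds\<in>D. coherence_cost (dA * dB) dC ds)"
    by (simp add: D_def coh_form_def coherence_cost_def)
  then show ?thesis
    using \<open>D \<noteq> {}\<close> coh_form_bounds_le_coherence_cost[OF pos] by (auto simp: D_def intro!: cINF_greatest)
qed

end
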